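(* Let $e:\mathbb{R}^n\to\mathbb{R}^n$ and $f:\mathbb{R}^n\times\mathbb{R}^m\to\mathbb{R}^n$ be continuously differentiable, consider the implicit model $e(x_{t+1})=f(x_t,u_t)$, and let $\alpha\in(0,1)$. Suppose there exists $\epsilon>0$ with $E(x)+E(x)^\top\succ\epsilon I$ for all $x$, and that for all $(x,u)$: $$F(x,u)\ge 0,\quad K(x,u)\ge 0,\quad E(x)\in\mathbb{M}^n,\quad \mathbf{1}^\top\big(\alpha E(x)-F(x,u)\big)\ge 0 .$$ Then the model is well-posed, monotone, and contracting with rate $\alpha$. If in addition $e(0)=f(0,0)$, the model is also positive.
   Context: Consider discrete-time implicit models $e(x_{t+1})=f(x_t,u_t)$, $t=0,1,2,\dots$, with state $x_t\in\mathbb{R}^n$ and input $u_t\in\mathbb{R}^m$, where $e$ and $f$ are continuously differentiable. Write $E=\partial e/\partial x$, $F=\partial f/\partial x$, $K=\partial f/\partial u$. The model is well-posed if for every $(x_t,u_t)$ there is a unique $x_{t+1}$ satisfying the model equation. A well-posed system is contracting with rate $\alpha\in(0,1)$ if there is $p\in[1,\infty]$ such that for any two initial conditions $x^a_0,x^b_0$ and any common input sequence there exists a continuous function $b_p(x^a_0,x^b_0)>0$ with $|x^a_t-x^b_t|_p<\alpha^t b_p(x^a_0,x^b_0)$ for all $t$. It is monotone if $x^a_0\ge x^b_0$ and $u^a_t\ge u^b_t$ for all $t$ imply $x^a_t\ge x^b_t$ for all $t$. It is positive if $x_0\ge0$ and $u_t\ge 0$ for all $t$ imply $x_t\ge0$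 for all $t$. Inequalities between vectors/matrices are elementwise; $\mathbf{1}$ is the all-ones column vector; $M\succ0$ means positive definite. $\mathbb{M}^n$ is the set of $n\times n$ nonsingular M-matrices: real matrices with all off-diagonal entries $\le0$ and all eigenvalues having positive real part. *)

theory Defs
  imports "HOL-Analysis.Analysis"
begin

text \<open>Implicit model  e(x_{t+1}) = f(x_t, u_t)  with x in R^n (real^'n), u in R^m (real^'m).
  Orderings on vectors and matrices are the library's componentwise ones.\<close>

definition well_posed :: "(real^'n \<Rightarrow> real^'n) \<Rightarrow> (real^'n \<Rightarrow> real^'m \<Rightarrow> real^'n) \<Rightarrow> bool" where
  "well_posed e f \<longleftrightarrow> (\<forall>x u. \<exists>!y. e y = f x u)"

definition is_traj :: "(real^'n \<Rightarrow> real^'n) \<Rightarrow> (real^'n \<Rightarrow> real^'m \<Rightarrow> real^'n)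
    \<Rightarrow> (nat \<Rightarrow> real^'n) \<Rightarrow> (nat \<Rightarrow> real^'m) \<Rightarrow> bool" where
  "is_traj e f x u \<longleftrightarrow> (\<forall>t. e (x (Suc t)) = f (x t) (u t))"

definition pnorm :: "ereal \<Rightarrow> real^'n \<Rightarrow> real" where
  "pnorm p x = (if p = \<infinity> then Max (range (\<lambda>i. \<bar>x $ i\<bar>))
                else (\<Sum>i\<in>UNIV. \<bar>x $ i\<bar> powr real_of_ereal p) powr (1 / real_of_ereal p))"

definition contracting :: "(real^'n \<Rightarrow> real^'n) \<Rightarrow> (real^'n \<Rightarrow> real^'m \<Rightarrow> real^'n) \<Rightarrow> real \<Rightarrow> bool" where
  "contracting e f \<alpha> \<longleftrightarrow> well_posed e f \<and>
     (\<exists>p::ereal. 1 \<le> p \<and>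
        (\<forall>u::nat \<Rightarrow> real^'m. \<exists>b :: (real^'n) \<times> (real^'n) \<Rightarrow> real.
            continuous_on UNIV b \<and> (\<forall>z. b z > 0) \<and>
            (\<forall>xa xb. is_traj e f xa u \<longrightarrow> is_traj e f xb u \<longrightarrow>
               (\<forall>t. pnorm p (xa t - xb t) < \<alpha> ^ t * b (xa 0, xb 0)))))"

definition monotone_sys :: "(real^'n \<Rightarrow> real^'n) \<Rightarrow> (real^'n \<Rightarrow> real^'m \<Rightarrow> real^'n) \<Rightarrow> bool" where
  "monotone_sys e f \<longleftrightarrow>
     (\<forall>xa xb ua ub. is_traj e f xa ua \<longrightarrow> is_traj e f xb ub \<longrightarrow>
        xa 0 \<ge> xb 0 \<longrightarrow> (\<forall>t. ua t \<ge> ub t) \<longrightarrow> (\<forall>t. xa t \<ge> xb t))"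

definition positive_sys :: "(real^'n \<Rightarrow> real^'n) \<Rightarrow> (real^'n \<Rightarrow> real^'m \<Rightarrow> real^'n) \<Rightarrow> bool" where
  "positive_sys e f \<longleftrightarrow>
     (\<forall>x u. is_traj e f x u \<longrightarrow> x 0 \<ge> 0 \<longrightarrow> (\<forall>t. u t \<ge> 0) \<longrightarrow> (\<forall>t. x t \<ge> 0))"

definition cmat :: "real^'n^'n \<Rightarrow> complex^'n^'n" where
  "cmat A = (\<chi> i j. complex_of_real (A $ i $ j))"

definition M_matrix :: "real^'n^'n \<Rightarrow> bool" where
  "M_matrix A \<longleftrightarrow> (\<forall>i j. i \<noteq> j \<longrightarrow> A $ i $ j \<le> 0) \<and>
     (\<forall>c::complex. (\<exists>v::complex^'n. v \<noteq> 0 \<and> cmat A *v v = c *s v) \<longrightarrow> Re c > 0)"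

definition pos_def :: "real^'n^'n \<Rightarrow> bool" where
  "pos_def M \<longleftrightarrow> M = transpose M \<and> (\<forall>v. v \<noteq> 0 \<longrightarrow> v \<bullet> (M *v v) > 0)"

end

theory Submission
  imports Defs
begin

text \<open>Positive definiteness of \<open>E + E\<^sup>T - \<epsilon> I\<close> makes every Jacobian coercive, \<open>v\<^sup>T E v \<ge> \<epsilon>/2 |v|\<^sup>2\<close>.
  Along segments this makes \<open>e\<close> strongly monotone, hence injective with a Lipschitz inverse,
  and a minimiser of \<open>|e y - t|\<close> must solve \<open>e y = t\<close>, so \<open>e\<close> is a bijection: the model is
  well-posed. A coercive Z-matrix is inverse-positive; applied to Jacobians at intermediate
  points this shows that \<open>e\<close> reflects the componentwise order, while \<open>F, K \<ge> 0\<close> make \<open>f\<close>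
  order preserving, giving monotonicity, and positivity via the zero trajectory. Finally
  \<open>x\<^sub>t \<mapsto> e(x\<^sub>t)\<close> contracts in the 1-norm: the map \<open>z \<mapsto> f(e\<^sup>-\<^sup>1 z, u)\<close> has Jacobian \<open>F E\<^sup>-\<^sup>1\<close>,
  and the column-sum condition bounds its induced 1-norm by \<open>\<alpha>\<close> because \<open>E\<^sup>-\<^sup>1 \<ge> 0\<close>.\<close>

lemma pos_def_shift_imp_coercive:
  fixes A :: "real^'n^'n"
  assumes "pos_def (A + transpose A - \<epsilon> *\<^sub>R mat 1)"
  shows "\<epsilon>/2 * (v \<bullet> v) \<le> v \<bullet> (A *v v)"
proof (cases "v = 0")
  case False
  with assms have "v \<bullet> ((A + transpose A - \<epsilon> *\<^sub>R mat 1) *v v) > 0"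
    unfolding pos_def_def by blast
  moreover have "v \<bullet> (transpose A *v v) = v \<bullet> (A *v v)"
    by (metis dot_lmul_matrix inner_commute transpose_matrix_vector)
  ultimately show ?thesis
    by (simp add: matrix_vector_mult_add_rdistrib matrix_vector_mult_diff_rdistrib
        inner_diff_right inner_add_right flip: scaleR_matrix_vector_assoc)
qed simp

lemma inner_nonneg_cart: "0 \<le> v \<Longrightarrow> 0 \<le> w \<Longrightarrow> 0 \<le> (v::real^'n) \<bullet> w"
  unfolding inner_vec_def less_eq_vec_def by (auto intro!: sum_nonneg)

lemma matrix_vector_mult_nonneg: "0 \<le> (A::real^'m^'n) \<Longrightarrow> 0 \<le> v \<Longrightarrow> 0 \<le> A *v v"
  unfolding matrix_vector_mult_def less_eq_vec_def by (auto intro!: sum_nonneg)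

definition neg_part :: "real^'n \<Rightarrow> real^'n" where
  "neg_part d = (\<chi> i. min (d$i) 0)"

lemma neg_part_inner_nonpos: "0 \<le> w \<Longrightarrow> neg_part d \<bullet> w \<le> 0"
  unfolding inner_vec_def neg_part_def less_eq_vec_def
  by (auto intro!: sum_nonpos simp: mult_nonpos_nonneg)

lemma neg_part_eq_0_imp_nonneg: "neg_part d = 0 \<Longrightarrow> 0 \<le> d"
  by (auto simp: neg_part_def vec_eq_iff less_eq_vec_def min_def split: if_splits) (metis linear)

lemma Z_matrix_neg_part_inner_le:
  fixes A :: "real^'n^'n"
  assumes Z: "\<And>i j. i \<noteq> j \<Longrightarrow> A $ i $ j \<le> 0"
  shows "neg_part d \<bullet> (A *v neg_part d) \<le> neg_part d \<bullet> (A *v d)"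
proof -
  define p where "p = (\<chi> i. max (d$i) 0)"
  have d: "d = neg_part d + p" by (simp add: vec_eq_iff neg_part_def p_def min_def max_def)
  have "0 \<le> neg_part d $ i * A $ i $ j * p $ j" for i j
  proof (cases "i = j")
    case False
    then have "0 \<le> neg_part d $ i * A $ i $ j" using Z by (simp add: neg_part_def mult_nonpos_nonpos)
    then show ?thesis by (simp add: p_def)
  qed (simp add: neg_part_def p_def min_def max_def)
  then have "0 \<le> (\<Sum>i\<in>UNIV. \<Sum>j\<in>UNIV. neg_part d $ i * A $ i $ j * p $ j)"
    by (intro sum_nonneg)
  also have "\<dots> = neg_part d \<bullet> (A *v p)"
    by (simp add: inner_vec_def matrix_vector_mult_def sum_distrib_left mult.assoc)
  finally show ?thesis
    by (subst (2) d) (simp add: matrix_vector_right_distrib inner_add_right)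
qed

text \<open>A nonlinear form of inverse-positivity of coercive Z-matrices: it is applied below
  with \<open>A\<close> a Jacobian at a mean-value point that depends on the test vector \<open>neg_part d\<close>.\<close>

lemma coercive_Z_matrix_nonneg:
  fixes A :: "real^'n^'n"
  assumes Z: "\<And>i j. i \<noteq> j \<Longrightarrow> A $ i $ j \<le> 0"
    and coercive: "\<And>v. c * (v \<bullet> v) \<le> v \<bullet> (A *v v)" and "0 < c"
    and "neg_part d \<bullet> (A *v d) \<le> 0"
  shows "0 \<le> d"
proof -
  have "c * (neg_part d \<bullet> neg_part d) \<le> 0"
    using coercive[of "neg_part d"] Z_matrix_neg_part_inner_le[OF Z, of d] assms(4) by linarith
  then have "neg_part d \<bullet> neg_part d \<le> 0" using \<open>0 < c\<close> by (simp add: mult_le_0_iff)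
  then have "neg_part d = 0" using inner_ge_zero[of "neg_part d"] by (simp del: inner_ge_zero)
  then show ?thesis by (rule neg_part_eq_0_imp_nonneg)
qed

lemma coercive_Z_matrix_inverse_nonneg:
  fixes A B :: "real^'n^'n"
  assumes Z: "\<And>i j. i \<noteq> j \<Longrightarrow> A $ i $ j \<le> 0"
    and coercive: "\<And>v. c * (v \<bullet> v) \<le> v \<bullet> (A *v v)" and "0 < c"
    and "B ** A = mat 1" and "0 \<le> w"
  shows "0 \<le> B *v w"
proof (rule coercive_Z_matrix_nonneg[OF Z coercive \<open>0 < c\<close>])
  have "A ** B = mat 1" using \<open>B ** A = mat 1\<close> matrix_left_right_inverse by blast
  then have "A *v (B *v w) = w" by (simp add: matrix_vector_mul_assoc)
  then show "neg_part (B *v w) \<bullet> (A *v (B *v w)) \<le> 0"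
    using neg_part_inner_nonpos[OF \<open>0 \<le> w\<close>] by simp
qed

definition l1_norm :: "real^'n \<Rightarrow> real" where
  "l1_norm v = (\<Sum>i\<in>UNIV. \<bar>v$i\<bar>)"

lemma l1_norm_nonneg: "0 \<le> l1_norm v"
  by (simp add: l1_norm_def sum_nonneg)

lemma l1_norm_diff_le: "l1_norm (v - w) \<le> l1_norm v + l1_norm w"
  unfolding l1_norm_def by (simp flip: sum.distrib add: sum_mono abs_triangle_ineq4)

lemma l1_norm_of_nonneg: "0 \<le> v \<Longrightarrow> l1_norm v = vec 1 \<bullet> v"
  unfolding l1_norm_def inner_vec_def less_eq_vec_def by simp

lemma inner_le_l1_norm:
  assumes "\<And>i. \<bar>s$i\<bar> \<le> 1"
  shows "s \<bullet> v \<le> l1_norm v"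
proof -
  have "s$i * v$i \<le> \<bar>v$i\<bar>" for i
  proof -
    have "s$i * v$i \<le> \<bar>s$i\<bar> * \<bar>v$i\<bar>" by (metis abs_ge_self abs_mult)
    also have "\<dots> \<le> \<bar>v$i\<bar>" using assms[of i] by (simp add: mult_left_le_one_le)
    finally show ?thesis .
  qed
  then show ?thesis unfolding inner_vec_def l1_norm_def by (simp add: sum_mono)
qed

lemma inner_sgn_eq_l1_norm: "(\<chi> i. sgn (v$i)) \<bullet> v = l1_norm v"
  unfolding inner_vec_def l1_norm_def by (auto intro!: sum.cong simp: abs_sgn mult.commute)

lemma column_sum_bound:
  fixes E F :: "real^'n^'n"
  assumes "vec 1 v* (\<alpha> *\<^sub>R E - F) \<ge> 0" and "0 \<le> y"
  shows "vec 1 \<bullet> (F *v y) \<le> \<alpha> * (vec 1 \<bullet> (E *v y))"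
proof -
  have "0 \<le> (vec 1 v* (\<alpha> *\<^sub>R E - F)) \<bullet> y" using inner_nonneg_cart assms by blast
  also have "\<dots> = \<alpha> * (vec 1 \<bullet> (E *v y)) - vec 1 \<bullet> (F *v y)"
    by (simp add: dot_lmul_matrix matrix_vector_mult_diff_rdistrib inner_diff_right
        flip: scaleR_matrix_vector_assoc)
  finally show ?thesis by simp
qed

text \<open>Splitting \<open>\<delta>\<close> into positive and negative parts reduces the claim to nonnegative
  vectors, where \<open>B = E\<^sup>-\<^sup>1 \<ge> 0\<close> and the 1-norm is the linear functional \<open>\<one>\<^sup>T\<close>.\<close>

lemma l1_norm_mult_inverse_le:
  fixes E F B :: "real^'n^'n"
  assumes Z: "\<And>i j. i \<noteq> j \<Longrightarrow> E $ i $ j \<le> 0"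
    and coercive: "\<And>v. c * (v \<bullet> v) \<le> v \<bullet> (E *v v)" and "0 < c"
    and "0 \<le> F" and colsum: "vec 1 v* (\<alpha> *\<^sub>R E - F) \<ge> 0"
    and inverse: "B ** E = mat 1"
  shows "l1_norm (F *v (B *v \<delta>)) \<le> \<alpha> * l1_norm \<delta>"
proof -
  have EB: "E ** B = mat 1" using inverse matrix_left_right_inverse by blast
  define dp where "dp = (\<chi> i. max (\<delta>$i) 0)"
  define dm where "dm = (\<chi> i. max (- \<delta>$i) 0)"
  have "0 \<le> dp" "0 \<le> dm" by (simp_all add: dp_def dm_def less_eq_vec_def)
  define y1 where "y1 = B *v dp"
  define y2 where "y2 = B *v dm"
  have y: "0 \<le> y1" "0 \<le> y2"
    unfolding y1_def y2_def
    using coercive_Z_matrix_inverse_nonneg[OF Z coercive \<open>0 < c\<close> inverse] \<open>0 \<le> dp\<close> \<open>0 \<le> dm\<close>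
    by auto
  have Ey: "E *v y1 = dp" "E *v y2 = dm"
    by (simp_all add: y1_def y2_def matrix_vector_mul_assoc EB)
  have "\<delta> = dp - dm" by (simp add: vec_eq_iff dp_def dm_def max_def)
  then have "B *v \<delta> = y1 - y2"
    by (simp add: y1_def y2_def matrix_vector_mult_diff_distrib)
  then have "l1_norm (F *v (B *v \<delta>)) \<le> l1_norm (F *v y1) + l1_norm (F *v y2)"
    by (simp add: matrix_vector_mult_diff_distrib l1_norm_diff_le)
  also have "\<dots> = vec 1 \<bullet> (F *v y1) + vec 1 \<bullet> (F *v y2)"
    using y matrix_vector_mult_nonneg[OF \<open>0 \<le> F\<close>] by (simp add: l1_norm_of_nonneg)
  also have "\<dots> \<le> \<alpha> * (vec 1 \<bullet> dp) + \<alpha> * (vec 1 \<bullet> dm)"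
    using column_sum_bound[OF colsum] y Ey by (metis add_mono)
  also have "\<dots> = \<alpha> * l1_norm \<delta>"
    by (simp add: inner_vec_def l1_norm_def dp_def dm_def flip: distrib_left sum.distrib)
       (rule disjI2, rule sum.cong, auto simp: max_def)
  finally show ?thesis .
qed

lemma coercive_matrix_left_invertible:
  fixes A :: "real^'n^'n"
  assumes coercive: "\<And>v. c * (v \<bullet> v) \<le> v \<bullet> (A *v v)" and "0 < c"
  shows "\<exists>B. B ** A = mat 1"
  unfolding matrix_left_invertible_ker
proof (intro allI impI)
  fix v assume "A *v v = 0"
  then have "v \<bullet> v \<le> 0" using coercive[of v] \<open>0 < c\<close> by (simp add: mult_le_0_iff)
  then show "v = 0" using inner_ge_zero[of v] by (simp del: inner_ge_zero)
qed

lemma mvt_inner_segment: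
  fixes g :: "'a::real_normed_vector \<Rightarrow> real^'k"
  assumes der: "\<And>x. (g has_derivative D x) (at x)"
  shows "\<exists>\<tau>\<in>{0<..<1}. w \<bullet> (g b - g a) = w \<bullet> D (a + \<tau> *\<^sub>R (b - a)) (b - a)"
proof -
  define \<phi> where "\<phi> \<tau> = w \<bullet> g (a + \<tau> *\<^sub>R (b - a))" for \<tau>
  have "(\<phi> has_derivative (\<lambda>h. w \<bullet> D (a + \<tau> *\<^sub>R (b - a)) (h *\<^sub>R (b - a)))) (at \<tau> within {0..1})"
    for \<tau>
  proof -
    have segment: "((\<lambda>\<tau>. a + \<tau> *\<^sub>R (b - a)) has_derivative (\<lambda>h. h *\<^sub>R (b - a))) (at \<tau>)"
      by (auto intro!: derivative_eq_intros)
    from has_derivative_inner_right[OF diff_chain_at[OF segment der], of w]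
    show ?thesis unfolding \<phi>_def o_def by (rule has_derivative_at_withinI)
  qed
  from mvt_simple[of 0 1 \<phi>, OF _ this] obtain \<tau> where "\<tau> \<in> {0<..<1}"
    "\<phi> 1 - \<phi> 0 = w \<bullet> D (a + \<tau> *\<^sub>R (b - a)) (1 *\<^sub>R (b - a))" by auto
  then show ?thesis by (auto simp: \<phi>_def inner_diff_right)
qed

context
  fixes e :: "real^'n \<Rightarrow> real^'n" and E :: "real^'n \<Rightarrow> real^'n^'n" and c :: real
  assumes e_deriv: "\<And>x. (e has_derivative (\<lambda>h. E x *v h)) (at x)"
    and coercive: "\<And>x v. c * (v \<bullet> v) \<le> v \<bullet> (E x *v v)" and c_pos: "0 < c"
begin

lemma coercive_derivative_lower_lipschitz: "c * norm (y - z) \<le> norm (e y - e z)"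
proof -
  obtain \<tau> where "(y - z) \<bullet> (e y - e z) = (y - z) \<bullet> (E (z + \<tau> *\<^sub>R (y - z)) *v (y - z))"
    using mvt_inner_segment[OF e_deriv, of "y - z" y z] by blast
  then have "c * ((y - z) \<bullet> (y - z)) \<le> (y - z) \<bullet> (e y - e z)"
    using coercive by simp
  also have "\<dots> \<le> norm (y - z) * norm (e y - e z)"
    by (rule norm_cauchy_schwarz)
  finally have "c * norm (y - z) * norm (y - z) \<le> norm (y - z) * norm (e y - e z)"
    by (simp add: power2_norm_eq_inner[symmetric] power2_eq_square)
  then show ?thesis
    by (cases "norm (y - z) = 0") (auto simp: mult.commute)
qed

lemma coercive_derivative_inj: "inj e"
proof (rule injI)
  fix y z assume "e y = e z"
  then have "c * norm (y - z) \<le> 0" using coercive_derivative_lower_lipschitz[of y z] by simp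
  then show "y = z" using c_pos by (simp add: mult_le_0_iff)
qed

lemma coercive_derivative_continuous: "continuous_on UNIV e"
  by (intro continuous_at_imp_continuous_on ballI has_derivative_continuous[OF e_deriv])

lemma coercive_derivative_dist_attains_min: "\<exists>y0. \<forall>y. norm (e y0 - t) \<le> norm (e y - t)"
proof -
  define R where "R = 2 * norm (e 0 - t) / c + 1"
  have "0 < R" using c_pos by (simp add: R_def add_nonneg_pos)
  have "continuous_on (cball 0 R) (\<lambda>y. norm (e y - t))"
    using coercive_derivative_continuous
    by (intro continuous_on_norm continuous_on_diff continuous_on_const)
       (rule continuous_on_subset, auto)
  moreover have "cball 0 R \<noteq> {}" using \<open>0 < R\<close> by simp
  ultimately obtain y0 where y0: "y0 \<in> cball 0 R" "\<And>y. y \<in> cball 0 R \<Longrightarrow> norm (e y0 - t) \<le> norm (e y - t)"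
    using continuous_attains_inf[OF compact_cball] by blast
  have "norm (e y0 - t) \<le> norm (e y - t)" if "y \<notin> cball 0 R" for y
  proof -
    have "c * R < c * norm y" using that c_pos by simp
    also have "\<dots> \<le> norm (e y - e 0)" using coercive_derivative_lower_lipschitz[of y 0] by simp
    also have "\<dots> \<le> norm (e y - t) + norm (e 0 - t)"
      using norm_triangle_ineq4[of "e y - t" "e 0 - t"] by simp
    finally have "c * R < norm (e y - t) + norm (e 0 - t)" .
    moreover have "c * R = 2 * norm (e 0 - t) + c" using c_pos by (simp add: R_def field_simps)
    ultimately have "norm (e 0 - t) \<le> norm (e y - t)" using c_pos by linarith
    moreover have "norm (e y0 - t) \<le> norm (e 0 - t)" using y0 \<open>0 < R\<close> by simp
    ultimately show ?thesis by simp
  qed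
  with y0 show ?thesis by blast
qed

text \<open>At a minimiser \<open>y0\<close> the derivative of \<open>|e(y0 + \<tau> w) - t|\<^sup>2\<close> at \<open>\<tau> = 0\<close>, with
  \<open>w = e y0 - t\<close>, is \<open>2 w\<^sup>T E(y0) w \<ge> 2 c |w|\<^sup>2\<close>, so it vanishes only if \<open>w = 0\<close>.\<close>

lemma coercive_derivative_min_dist_imp_eq:
  assumes min: "\<And>y. norm (e y0 - t) \<le> norm (e y - t)"
  shows "e y0 = t"
proof -
  define w where "w = e y0 - t"
  define \<phi> where "\<phi> \<tau> = (e (y0 + \<tau> *\<^sub>R w) - t) \<bullet> (e (y0 + \<tau> *\<^sub>R w) - t)" for \<tau> :: real
  have line: "((\<lambda>\<tau>::real. y0 + \<tau> *\<^sub>R w) has_derivative (\<lambda>h. h *\<^sub>R w)) (at 0)"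
    by (auto intro!: derivative_eq_intros)
  have "((\<lambda>\<tau>. e (y0 + \<tau> *\<^sub>R w) - t) has_derivative (\<lambda>h. h *\<^sub>R (E y0 *v w))) (at 0)"
    using has_derivative_diff[OF diff_chain_at[OF line e_deriv[of "y0 + 0 *\<^sub>R w"]]
        has_derivative_const[of t]]
    by (simp add: o_def matrix_vector_mult_scaleR)
  from has_derivative_inner[OF this this]
  have deriv: "DERIV \<phi> 0 :> 2 * (w \<bullet> (E y0 *v w))"
    unfolding has_field_derivative_def \<phi>_def
    by (rule has_derivative_eq_rhs) (simp add: fun_eq_iff inner_commute w_def)
  moreover have "\<forall>\<tau>. \<bar>0 - \<tau>\<bar> < 1 \<longrightarrow> \<phi> 0 \<le> \<phi> \<tau>"
    using min
    by (simp add: \<phi>_def w_def flip: power2_norm_eq_inner)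
  ultimately have "2 * (w \<bullet> (E y0 *v w)) = 0"
    by (intro DERIV_local_min[where d=1]) auto
  then have "w \<bullet> w \<le> 0" using coercive[of w y0] c_pos by (simp add: mult_le_0_iff)
  then show ?thesis using inner_ge_zero[of w] by (simp add: w_def del: inner_ge_zero)
qed

lemma coercive_derivative_bij: "bij e"
proof (rule bijI[OF coercive_derivative_inj], unfold surj_def, rule allI)
  fix t
  obtain y0 where "\<And>y. norm (e y0 - t) \<le> norm (e y - t)"
    using coercive_derivative_dist_attains_min by blast
  then show "\<exists>y. t = e y" using coercive_derivative_min_dist_imp_eq by metis
qed

lemma coercive_derivative_inv_has_derivative:
  assumes "B ** E (inv e z) = mat 1"
  shows "(inv e has_derivative (\<lambda>h. B *v h)) (at z)"
proof (rule has_derivative_inverse_basic[where f = e and T = UNIV])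
  have e_inv: "e (inv e z) = z" for z
    using coercive_derivative_bij by (simp add: bij_is_surj surj_f_inv_f)
  then show "\<And>y. y \<in> UNIV \<Longrightarrow> e (inv e y) = y" by blast
  show "(e has_derivative (\<lambda>h. E (inv e z) *v h)) (at (inv e z))" by (rule e_deriv)
  show "bounded_linear ((*v) B)" by (simp add: matrix_vector_mul_bounded_linear)
  show "(*v) B \<circ> (\<lambda>h. E (inv e z) *v h) = id"
    by (auto simp: fun_eq_iff matrix_vector_mul_assoc assms)
  have "norm (inv e a - inv e b) \<le> norm (a - b) / c" for a b
    using coercive_derivative_lower_lipschitz[of "inv e a" "inv e b"] c_pos
    by (simp add: e_inv field_simps)
  then have "lipschitz_on (1 / c) UNIV (inv e)"
    by (intro lipschitz_onI) (auto simp: dist_norm c_pos less_imp_le)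
  then show "continuous (at z) (inv e)"
    using lipschitz_on_continuous_on continuous_on_eq_continuous_at by blast
qed auto

lemma coercive_Z_derivative_order_reflecting:
  assumes Z: "\<And>x i j. i \<noteq> j \<Longrightarrow> E x $ i $ j \<le> 0" and "e z \<le> e y"
  shows "z \<le> y"
proof -
  obtain \<tau> where "neg_part (y - z) \<bullet> (e y - e z)
      = neg_part (y - z) \<bullet> (E (z + \<tau> *\<^sub>R (y - z)) *v (y - z))"
    using mvt_inner_segment[OF e_deriv, of "neg_part (y - z)" y z] by blast
  moreover have "neg_part (y - z) \<bullet> (e y - e z) \<le> 0"
    using \<open>e z \<le> e y\<close> by (intro neg_part_inner_nonpos) (simp add: less_eq_vec_def)
  ultimately have "0 \<le> y - z"
    using coercive_Z_matrix_nonneg[OF Z[where x="z + \<tau> *\<^sub>R (y - z)"] coercive c_pos, of "y - z"]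
    by simp
  then show ?thesis by simp
qed

text \<open>Mean value theorem for \<open>z \<mapsto> f(e\<^sup>-\<^sup>1 z, u)\<close>, tested against the sign vector of
  \<open>f x u - f x' u\<close>.\<close>

lemma l1_norm_implicit_step_le:
  fixes f :: "real^'n \<Rightarrow> real^'m \<Rightarrow> real^'n"
    and F :: "real^'n \<Rightarrow> real^'m \<Rightarrow> real^'n^'n" and K :: "real^'n \<Rightarrow> real^'m \<Rightarrow> real^'m^'n"
  assumes Z: "\<And>x i j. i \<noteq> j \<Longrightarrow> E x $ i $ j \<le> 0"
    and f_deriv: "\<And>x u. ((\<lambda>(y, w). f y w) has_derivative
                     (\<lambda>(h, k). F x u *v h + K x u *v k)) (at (x, u))"
    and F_nonneg: "\<And>x u. 0 \<le> F x u"
    and colsum: "\<And>x u. vec 1 v* (\<alpha> *\<^sub>R E x - F x u) \<ge> 0"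
  shows "l1_norm (f x u - f x' u) \<le> \<alpha> * l1_norm (e x - e x')"
proof -
  define G where "G = inv e"
  define B where "B z = (SOME B. B ** E (G z) = mat 1)" for z
  have B: "B z ** E (G z) = mat 1" for z
    unfolding B_def using coercive_matrix_left_invertible[OF coercive c_pos] by (rule someI_ex)
  have "((\<lambda>z. (G z, u)) has_derivative (\<lambda>h. (B z *v h, 0))) (at z)" for z
    unfolding G_def
    by (intro has_derivative_Pair coercive_derivative_inv_has_derivative has_derivative_const)
       (simp add: B[unfolded G_def])
  from diff_chain_at[OF this f_deriv]
  have comp_deriv: "((\<lambda>z. f (G z) u) has_derivative (\<lambda>h. F (G z) u *v (B z *v h))) (at z)" for z
    by (simp add: o_def)
  define s where "s = (\<chi> i. sgn ((f x u - f x' u)$i))"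
  from mvt_inner_segment[OF comp_deriv, of s "e x" "e x'"] obtain p
    where "s \<bullet> (f (G (e x)) u - f (G (e x')) u) = s \<bullet> (F (G p) u *v (B p *v (e x - e x')))"
    by blast
  moreover have "G (e y) = y" for y unfolding G_def using coercive_derivative_inj by simp
  ultimately have "l1_norm (f x u - f x' u) = s \<bullet> (F (G p) u *v (B p *v (e x - e x')))"
    by (simp add: s_def flip: inner_sgn_eq_l1_norm)
  also have "\<dots> \<le> l1_norm (F (G p) u *v (B p *v (e x - e x')))"
    by (rule inner_le_l1_norm) (simp add: s_def abs_sgn_eq)
  also have "\<dots> \<le> \<alpha> * l1_norm (e x - e x')"
    using l1_norm_mult_inverse_le[OF Z coercive c_pos F_nonneg colsum B] .
  finally show ?thesis .
qed

end

lemma nonneg_partial_derivatives_imp_mono: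
  fixes f :: "real^'n \<Rightarrow> real^'m \<Rightarrow> real^'k"
  assumes f_deriv: "\<And>x u. ((\<lambda>(y, w). f y w) has_derivative
                     (\<lambda>(h, k). F x u *v h + K x u *v k)) (at (x, u))"
    and F_nonneg: "\<And>x u. 0 \<le> F x u" and K_nonneg: "\<And>x u. 0 \<le> K x u"
    and "x' \<le> x" "u' \<le> u"
  shows "f x' u' \<le> f x u"
proof -
  have "((\<lambda>(y, w). f y w) has_derivative
      (\<lambda>(h, k). F (fst p) (snd p) *v h + K (fst p) (snd p) *v k)) (at p)" for p
    using f_deriv[of "fst p" "snd p"] by simp
  note mvt = mvt_inner_segment[OF this]
  have "f x' u' $ i \<le> f x u $ i" for i
  proof -
    obtain p where "axis i 1 \<bullet> (f x u - f x' u')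
        = axis i 1 \<bullet> (F (fst p) (snd p) *v (x - x') + K (fst p) (snd p) *v (u - u'))"
      using mvt[of "axis i 1" "(x, u)" "(x', u')"] by auto
    moreover have "0 \<le> (F (fst p) (snd p) *v (x - x') + K (fst p) (snd p) *v (u - u')) $ i"
      using matrix_vector_mult_nonneg[OF F_nonneg, of "x - x'"]
        matrix_vector_mult_nonneg[OF K_nonneg, of "u - u'"] assms(4,5)
      by (simp add: less_eq_vec_def)
    ultimately show ?thesis by (simp add: inner_axis')
  qed
  then show ?thesis by (simp add: less_eq_vec_def)
qed

lemma well_posed_if_bij: "bij e \<Longrightarrow> well_posed e f"
  unfolding well_posed_def by (simp add: bij_iff)

lemma monotone_sys_if_order_preserving:
  assumes e_reflects: "\<And>y z. e z \<le> e y \<Longrightarrow> z \<le> y"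
    and f_mono: "\<And>x x' u u'. x' \<le> x \<Longrightarrow> u' \<le> u \<Longrightarrow> f x' u' \<le> f x u"
  shows "monotone_sys e f"
  unfolding monotone_sys_def
proof (intro allI impI)
  fix xa xb ua ub t
  assume "is_traj e f xa ua" "is_traj e f xb ub" "xb 0 \<le> xa 0" "\<forall>t. ub t \<le> ua t"
  then show "xb t \<le> xa t"
  proof (induction t)
    case (Suc t)
    then have "f (xb t) (ub t) \<le> f (xa t) (ua t)" by (simp add: f_mono)
    with Suc.prems show ?case by (simp add: is_traj_def e_reflects)
  qed simp
qed

lemma positive_sys_if_monotone_sys:
  assumes "monotone_sys e f" and "e 0 = f 0 0"
  shows "positive_sys e f"
proof -
  have "is_traj e f (\<lambda>_. 0) (\<lambda>_. 0)" using assms(2) by (simp add: is_traj_def)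
  then show ?thesis
    using assms(1) unfolding positive_sys_def monotone_sys_def by blast
qed

lemma pnorm_2: "pnorm 2 v = norm v"
  unfolding pnorm_def norm_vec_def L2_set_def by (simp add: powr_half_sqrt sum_nonneg)

lemma contracting_if_l1_contraction:
  fixes e :: "real^'n \<Rightarrow> real^'n" and f :: "real^'n \<Rightarrow> real^'m \<Rightarrow> real^'n"
  assumes "well_posed e f" and e_cont: "continuous_on UNIV e"
    and lip: "\<And>y z. c * norm (y - z) \<le> norm (e y - e z)" and "0 < c" and "0 < \<alpha>"
    and step: "\<And>x x' u. l1_norm (f x u - f x' u) \<le> \<alpha> * l1_norm (e x - e x')"
  shows "contracting e f \<alpha>"
  unfolding contracting_def
proof (intro conjI exI[of _ "2::ereal"] allI \<open>well_posed e f\<close>)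
  fix u :: "nat \<Rightarrow> real^'m"
  define b where "b z = l1_norm (e (fst z) - e (snd z)) / c + 1" for z :: "(real^'n) \<times> (real^'n)"
  show "\<exists>b. continuous_on UNIV b \<and> (\<forall>z. 0 < b z) \<and>
      (\<forall>xa xb. is_traj e f xa u \<longrightarrow> is_traj e f xb u \<longrightarrow>
         (\<forall>t. pnorm 2 (xa t - xb t) < \<alpha> ^ t * b (xa 0, xb 0)))"
  proof (intro exI[of _ b] conjI allI impI)
    show "continuous_on UNIV b" unfolding b_def l1_norm_def
      using \<open>0 < c\<close> by (intro continuous_intros continuous_on_compose2[OF e_cont]) auto
    show "0 < b z" for z
      using l1_norm_nonneg \<open>0 < c\<close> unfolding b_def by (intro add_nonneg_pos divide_nonneg_pos) auto
    fix xa xb t assume "is_traj e f xa u" "is_traj e f xb u"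
    then have iter: "l1_norm (e (xa t) - e (xb t)) \<le> \<alpha> ^ t * l1_norm (e (xa 0) - e (xb 0))"
    proof (induction t)
      case (Suc t)
      then have "l1_norm (e (xa (Suc t)) - e (xb (Suc t))) \<le> \<alpha> * l1_norm (e (xa t) - e (xb t))"
        using step by (simp add: is_traj_def)
      also have "\<dots> \<le> \<alpha> * (\<alpha> ^ t * l1_norm (e (xa 0) - e (xb 0)))"
        using Suc \<open>0 < \<alpha>\<close> by (simp add: mult_left_mono)
      finally show ?case by simp
    qed simp
    have "c * norm (xa t - xb t) \<le> l1_norm (e (xa t) - e (xb t))"
      using lip norm_le_l1_cart unfolding l1_norm_def by (rule order.trans)
    also have "\<dots> \<le> \<alpha> ^ t * l1_norm (e (xa 0) - e (xb 0))" by (rule iter)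
    also have "\<dots> < c * (\<alpha> ^ t * b (xa 0, xb 0))"
      using \<open>0 < c\<close> \<open>0 < \<alpha>\<close> by (simp add: b_def field_simps)
    finally show "pnorm 2 (xa t - xb t) < \<alpha> ^ t * b (xa 0, xb 0)"
      unfolding pnorm_2 using \<open>0 < c\<close> by simp
  qed
qed simp

theorem theorem1:
  fixes e :: "real^'n \<Rightarrow> real^'n" and f :: "real^'n \<Rightarrow> real^'m \<Rightarrow> real^'n"
    and E :: "real^'n \<Rightarrow> real^'n^'n"
    and F :: "real^'n \<Rightarrow> real^'m \<Rightarrow> real^'n^'n"
    and K :: "real^'n \<Rightarrow> real^'m \<Rightarrow> real^'m^'n"
    and \<alpha> \<epsilon> :: real
  assumes e_deriv: "\<And>x. (e has_derivative (\<lambda>h. E x *v h)) (at x)"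
    and E_cont: "continuous_on UNIV E"
    and f_deriv: "\<And>x u. ((\<lambda>(y, w). f y w) has_derivative
                     (\<lambda>(h, k). F x u *v h + K x u *v k)) (at (x, u))"
    and F_cont: "continuous_on UNIV (\<lambda>(x, u). F x u)"
    and K_cont: "continuous_on UNIV (\<lambda>(x, u). K x u)"
    and \<alpha>: "0 < \<alpha>" "\<alpha> < 1"
    and \<epsilon>: "\<epsilon> > 0"
    and E_pd: "\<And>x. pos_def (E x + transpose (E x) - \<epsilon> *\<^sub>R mat 1)"
    and F_nonneg: "\<And>x u. F x u \<ge> 0"
    and K_nonneg: "\<And>x u. K x u \<ge> 0"
    and E_M: "\<And>x. M_matrix (E x)"
    and colsum: "\<And>x u. (vec 1 :: real^'n) v* (\<alpha> *\<^sub>R E x - F x u) \<ge> 0"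
  shows "well_posed e f \<and> monotone_sys e f \<and> contracting e f \<alpha> \<and>
         (e 0 = f 0 0 \<longrightarrow> positive_sys e f)"
proof -
  \<comment> \<open>The continuity of \<open>E, F, K\<close> and the spectral part of \<open>M_matrix\<close> are not needed:
    the mean value arguments use only differentiability, and coercivity replaces the spectrum.\<close>
  define c where "c = \<epsilon> / 2"
  have "0 < c" using \<epsilon> by (simp add: c_def)
  have coercive: "\<And>x v. c * (v \<bullet> v) \<le> v \<bullet> (E x *v v)"
    unfolding c_def using pos_def_shift_imp_coercive[OF E_pd] .
  have Z: "\<And>x i j. i \<noteq> j \<Longrightarrow> E x $ i $ j \<le> 0"
    using E_M unfolding M_matrix_def by blast
  note e_facts = e_deriv coercive \<open>0 < c\<close>
  have wp: "well_posed e f"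
    by (rule well_posed_if_bij[OF coercive_derivative_bij[OF e_facts]])
  have mono: "monotone_sys e f"
    by (rule monotone_sys_if_order_preserving[OF coercive_Z_derivative_order_reflecting[OF e_facts Z]
          nonneg_partial_derivatives_imp_mono[OF f_deriv F_nonneg K_nonneg]])
  have "contracting e f \<alpha>"
    by (rule contracting_if_l1_contraction[OF wp coercive_derivative_continuous[OF e_facts]
          coercive_derivative_lower_lipschitz[OF e_facts] \<open>0 < c\<close> \<alpha>(1)
          l1_norm_implicit_step_le[OF e_facts Z f_deriv F_nonneg colsum]])
  with wp mono show ?thesis using positive_sys_if_monotone_sys by blast
qed

end
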